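(* There is a sufficiently small $\epsilon>0$ such that, for each combinatorial line $L$ of $\mathrm{HJ}(d,n)$, the affine function $g^\epsilon_L$ vanishes on $\nu(P^\epsilon_L)$ and is positive on $\nu(P^\epsilon\setminus P^\epsilon_L)$.
   Context: Combinatorial lines and $\mathrm{HJ}(d,n)$: for $\tau\in([d]\cup\{*\})^n\setminus[d]^n$ and $k\in\mathbb{R}$, $\sigma(\tau,k)$ is $\tau$ with every $*$ replaced by $k$; $L_\tau=\{\sigma(\tau,k):k\in[d]\}$, and $\mathrm{HJ}(d,n)$ is the hypergraph on $[d]^n$ of all combinatorial lines. Vectors $v_1,\dots,v_n\in\mathbb{R}^2$ have positive $x$-components; $p_\sigma=\sum_i\sigma_iv_i$; $P=\{p_\sigma:\sigma\in[d]^n\}$ consists of distinct points; for a line $L$, $P_L=\{p_\sigma:\sigma\in L\}$ spans the line $S_L: y=a_Lx+b_L$, and it is assumed that $S_L\cap P=P_L$ for every line $L$. $\nu(x,y)=(x^2,xy,y^2,x,y)$. For $\epsilon>0$, $\phi_\epsilon(x,y)=(x,y+\sqrt{\epsilon x})$, $P^\epsilon=\phi_\epsilon(P)$, $P^\epsilon_L=\phi_\epsilon(P_L)$, $f^\epsilon_L(x,y)=(y-a_Lx-b_L)^2-\epsilon x$, and $g^\epsilon_L:\mathbb{R}^5\to\mathbb{R}$ is the affine function with $g^\epsilon_L(x^2,xy,y^2,x,y)=f^\epsilon_L(x,y)$. *)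

theory Defs
  imports "HOL-Analysis.Analysis"
begin

definition cube :: "nat \<Rightarrow> nat \<Rightarrow> (nat \<Rightarrow> nat) set" where
  "cube d n = {0..<n} \<rightarrow>\<^sub>E {1..d}"

text \<open>Templates tau in ([d] \<union> {*})^n minus [d]^n; the wildcard * is None.\<close>
definition is_template :: "nat \<Rightarrow> nat \<Rightarrow> (nat \<Rightarrow> nat option) \<Rightarrow> bool" where
  "is_template d n \<tau> \<longleftrightarrow>
     \<tau> \<in> {0..<n} \<rightarrow>\<^sub>E insert None (Some ` {1..d}) \<and> (\<exists>i<n. \<tau> i = None)"

definition subst_star :: "nat \<Rightarrow> (nat \<Rightarrow> nat option) \<Rightarrow> nat \<Rightarrow> (nat \<Rightarrow> nat)" where
  "subst_star n \<tau> k = restrict (\<lambda>i. case \<tau> i of None \<Rightarrow> k | Some j \<Rightarrow> j) {0..<n}"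

definition comb_line :: "nat \<Rightarrow> nat \<Rightarrow> (nat \<Rightarrow> nat option) \<Rightarrow> (nat \<Rightarrow> nat) set" where
  "comb_line d n \<tau> = {subst_star n \<tau> k | k. k \<in> {1..d}}"

definition HJ :: "nat \<Rightarrow> nat \<Rightarrow> (nat \<Rightarrow> nat) set set" where
  "HJ d n = {comb_line d n \<tau> | \<tau>. is_template d n \<tau>}"

definition pt :: "(nat \<Rightarrow> real \<times> real) \<Rightarrow> nat \<Rightarrow> (nat \<Rightarrow> nat) \<Rightarrow> real \<times> real" where
  "pt v n \<sigma> = (\<Sum>i<n. real (\<sigma> i) *\<^sub>R v i)"

definition nu :: "real \<times> real \<Rightarrow> real \<times> real \<times> real \<times> real \<times> real" where
  "nu q = (fst q ^ 2, fst q * snd q, snd q ^ 2, fst q, snd q)"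

definition phi :: "real \<Rightarrow> real \<times> real \<Rightarrow> real \<times> real" where
  "phi \<epsilon> q = (fst q, snd q + sqrt (\<epsilon> * fst q))"

definition fL :: "real \<Rightarrow> real \<Rightarrow> real \<Rightarrow> real \<times> real \<Rightarrow> real" where
  "fL a b \<epsilon> q = (snd q - a * fst q - b) ^ 2 - \<epsilon> * fst q"

text \<open>The affine function g on R^5 with g(nu(x,y)) = f(x,y), written out explicitly.\<close>
definition gL :: "real \<Rightarrow> real \<Rightarrow> real \<Rightarrow> real \<times> real \<times> real \<times> real \<times> real \<Rightarrow> real" where
  "gL a b \<epsilon> z = (case z of (z1, z2, z3, z4, z5) \<Rightarrow>
      a^2 * z1 - 2 * a * z2 + z3 + (2 * a * b - \<epsilon>) * z4 - 2 * b * z5 + b^2)"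

lemma gL_nu: "gL a b \<epsilon> (nu q) = fL a b \<epsilon> q"
  by (cases q) (simp add: gL_def nu_def fL_def power2_eq_square algebra_simps)

end

theory Submission
  imports Defs
begin

text \<open>For a point \<open>p\<close> with residual \<open>r = y - a x - b\<close> with respect to the line \<open>y = a x + b\<close>,
  the value \<open>f\<^sup>\<epsilon>\<^sub>L(\<phi>\<^sub>\<epsilon>(p)) = (r + \<surd>(\<epsilon> x))\<^sup>2 - \<epsilon> x\<close> is exactly \<open>0\<close> when \<open>r = 0\<close> and tends to
  \<open>r\<^sup>2\<close> as \<open>\<epsilon> \<rightarrow> 0\<close>. Hence it is positive for all small \<open>\<epsilon>\<close> when \<open>r \<noteq> 0\<close>, and since there are
  only finitely many lines and points, one \<open>\<epsilon>\<close> works for all of them simultaneously.\<close>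

lemma fL_phi_on_line:
  assumes "\<epsilon> \<ge> 0" "fst p \<ge> 0" "snd p = a * fst p + b"
  shows "fL a b \<epsilon> (phi \<epsilon> p) = 0"
  using assms by (simp add: fL_def phi_def)

lemma tendsto_fL_phi:
  "((\<lambda>\<epsilon>. fL a b \<epsilon> (phi \<epsilon> p)) \<longlongrightarrow> (snd p - a * fst p - b)\<^sup>2) (at_right 0)"
proof -
  have "((\<lambda>\<epsilon>. (snd p + sqrt (\<epsilon> * fst p) - a * fst p - b)\<^sup>2 - \<epsilon> * fst p)
          \<longlongrightarrow> (snd p + sqrt (0 * fst p) - a * fst p - b)\<^sup>2 - 0 * fst p) (at_right 0)"
    by (intro tendsto_intros)
  then show ?thesis
    by (simp add: fL_def phi_def)
qed

lemma eventually_fL_phi_pos: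
  assumes "snd p \<noteq> a * fst p + b"
  shows "eventually (\<lambda>\<epsilon>. fL a b \<epsilon> (phi \<epsilon> p) > 0) (at_right 0)"
  using assms by (intro order_tendstoD(1)[OF tendsto_fL_phi]) simp

lemma eventually_fL_phi_pos_finite:
  assumes "finite \<Lambda>" "finite P"
  shows "eventually (\<lambda>\<epsilon>. \<forall>L\<in>\<Lambda>. \<forall>p\<in>P.
           snd p \<noteq> a L * fst p + b L \<longrightarrow> fL (a L) (b L) \<epsilon> (phi \<epsilon> p) > 0) (at_right 0)"
proof (intro eventually_ball_finite ballI assms)
  fix L p
  show "eventually (\<lambda>\<epsilon>. snd p \<noteq> a L * fst p + b L \<longrightarrow> fL (a L) (b L) \<epsilon> (phi \<epsilon> p) > 0)
          (at_right 0)"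
    using eventually_fL_phi_pos by (cases "snd p = a L * fst p + b L") simp_all
qed

lemma finite_cube: "finite (cube d n)"
  unfolding cube_def by (intro finite_PiE) auto

lemma subst_star_in_cube:
  assumes "is_template d n \<tau>" "k \<in> {1..d}"
  shows "subst_star n \<tau> k \<in> cube d n"
  using assms unfolding is_template_def subst_star_def cube_def
  by (auto simp: PiE_iff split: option.splits)

lemma HJ_subset_Pow_cube: "HJ d n \<subseteq> Pow (cube d n)"
  unfolding HJ_def comb_line_def using subst_star_in_cube by blast

lemma finite_HJ: "finite (HJ d n)"
  using HJ_subset_Pow_cube finite_cube by (rule finite_subset[OF _ finite_Pow_iff[THEN iffD2]])

lemma fst_pt_nonneg:
  assumes "\<forall>i<n. fst (v i) > 0"
  shows "fst (pt v n \<sigma>) \<ge> 0"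
  using assms unfolding pt_def by (auto simp: fst_sum less_imp_le intro!: sum_nonneg mult_nonneg_nonneg)

theorem lemma2p6:
  fixes d n :: nat and v :: "nat \<Rightarrow> real \<times> real"
    and a b :: "(nat \<Rightarrow> nat) set \<Rightarrow> real"
  assumes pos: "\<forall>i<n. fst (v i) > 0"
    and distinct: "inj_on (pt v n) (cube d n)"
    and lines: "\<forall>L\<in>HJ d n.
        {q \<in> pt v n ` cube d n. snd q = a L * fst q + b L} = pt v n ` L"
  shows "\<exists>\<epsilon>>0. \<forall>L\<in>HJ d n.
           (\<forall>q\<in>phi \<epsilon> ` pt v n ` L. gL (a L) (b L) \<epsilon> (nu q) = 0) \<and>
           (\<forall>q\<in>phi \<epsilon> ` pt v n ` cube d n - phi \<epsilon> ` pt v n ` L.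
               gL (a L) (b L) \<epsilon> (nu q) > 0)"
proof -
  have "eventually (\<lambda>\<epsilon>. \<epsilon> > 0 \<and> (\<forall>L\<in>HJ d n. \<forall>p\<in>pt v n ` cube d n.
          snd p \<noteq> a L * fst p + b L \<longrightarrow> fL (a L) (b L) \<epsilon> (phi \<epsilon> p) > 0)) (at_right 0)"
    using eventually_at_right_less
      eventually_fL_phi_pos_finite[OF finite_HJ finite_imageI[OF finite_cube]]
    by (rule eventually_conj)
  then obtain \<epsilon> where \<epsilon>: "\<epsilon> > 0" and off_line: "\<forall>L\<in>HJ d n. \<forall>p\<in>pt v n ` cube d n.
          snd p \<noteq> a L * fst p + b L \<longrightarrow> fL (a L) (b L) \<epsilon> (phi \<epsilon> p) > 0"
    using eventually_happens' trivial_limit_at_right_real by blast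
  show ?thesis
  proof (intro exI[of _ \<epsilon>] conjI \<epsilon> ballI)
    fix L q assume L: "L \<in> HJ d n" and "q \<in> phi \<epsilon> ` pt v n ` L"
    then obtain p where p: "p \<in> pt v n ` L" "q = phi \<epsilon> p" by blast
    then have "snd p = a L * fst p + b L" using lines L by blast
    then show "gL (a L) (b L) \<epsilon> (nu q) = 0"
      using p \<epsilon> fst_pt_nonneg[OF pos] by (auto simp: gL_nu fL_phi_on_line)
  next
    fix L q assume L: "L \<in> HJ d n"
      and "q \<in> phi \<epsilon> ` pt v n ` cube d n - phi \<epsilon> ` pt v n ` L"
    then obtain p where p: "p \<in> pt v n ` cube d n" "p \<notin> pt v n ` L" "q = phi \<epsilon> p" by blast
    then have "snd p \<noteq> a L * fst p + b L" using lines L by blast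
    then have "fL (a L) (b L) \<epsilon> (phi \<epsilon> p) > 0"
      using off_line L p(1) by blast
    then show "gL (a L) (b L) \<epsilon> (nu q) > 0"
      by (simp add: gL_nu p(3))
  qed
qed

end
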